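(* Let $p$ be a prime and let $c:\mathbb{Z}\to\{B,R\}$ be a periodic coloring such that for every positive integer $d$ with $p\nmid d$ and every $a\in\mathbb{Z}$, the values $c(a),c(a+d),c(a+2d),c(a+3d)$ are not all equal. Then every period $T\ge1$ of $c$ (i.e. every $T$ with $c(n+T)=c(n)$ for all $n$) satisfies $T\ge p$. *)

theory Defs
  imports "HOL-Computational_Algebra.Primes"
begin

datatype color = B | R

end

theory Submission
  imports Defs
begin

text \<open>A period \<open>T\<close> of \<open>c\<close> is itself a common difference along which \<open>c\<close> is constant, so
  \<open>c 0, c T, c (2*T), c (3*T)\<close> are equal; the hypothesis then forces \<open>p\<close> to divide \<open>T\<close>,
  whence \<open>T \<ge> p\<close>.\<close>

lemma periodic_add_mult:
  fixes f :: "int \<Rightarrow> 'a"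
  assumes "\<And>n. f (n + T) = f n"
  shows "f (a + int k * T) = f a"
proof (induction k)
  case (Suc k)
  have "f (a + int (Suc k) * T) = f (a + int k * T + T)"
    by (simp add: algebra_simps)
  also have "\<dots> = f a" using assms Suc.IH by simp
  finally show ?case .
qed simp

theorem theorem6:
  fixes p :: nat and c :: "int \<Rightarrow> color"
  assumes "prime p"
    and "\<exists>T::int. T \<ge> 1 \<and> (\<forall>n. c (n + T) = c n)"
    and "\<And>d a. d > 0 \<Longrightarrow> \<not> (int p dvd d) \<Longrightarrow>
           \<not> (c a = c (a + d) \<and> c a = c (a + 2*d) \<and> c a = c (a + 3*d))"
  shows "\<forall>T::int. T \<ge> 1 \<and> (\<forall>n. c (n + T) = c n) \<longrightarrow> T \<ge> int p"
proof (intro allI impI)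
  fix T :: int
  assume "T \<ge> 1 \<and> (\<forall>n. c (n + T) = c n)"
  then have pos: "T > 0" and period: "\<And>n. c (n + T) = c n" by auto
  have "c (0 + int k * T) = c 0" for k
    by (rule periodic_add_mult) (rule period)
  from this[of 1] this[of 2] this[of 3]
  have "c 0 = c (0 + T) \<and> c 0 = c (0 + 2*T) \<and> c 0 = c (0 + 3*T)" by simp
  with assms(3)[OF pos] have "int p dvd T" by blast
  with pos show "T \<ge> int p" by (simp add: zdvd_imp_le)
qed

end
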